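(* Let $\Gamma=(G,\sigma)$, $G=(V,E)$, be a signed graph and $f:V\to\mathbb R$ a function not identically zero. Then for any three pairwise distinct weak nodal domains $D_1,D_2,D_3$ of $f$, $D_1\cap D_2\cap D_3=\emptyset$ (as vertex sets).
   Context: A signed graph is a finite simple undirected graph $G=(V,E)$ with $\sigma:E\to\{+1,-1\}$. A walk is $y_1,\dots,y_m$ ($m\ge2$) with consecutive vertices adjacent. For $f:V\to\mathbb R$, a W-walk of $f$ is a walk such that for any two consecutive nonzeros $y_i,y_j$ along it ($i<j$, $f(y_i)\ne0\ne f(y_j)$, $f(y_l)=0$ for $i<l<j$) one has $f(y_i)\sigma_{y_iy_{i+1}}\cdots\sigma_{y_{j-1}y_j}f(y_j)>0$. On $\Omega=\{x:f(x)\ne0\}$ the relation "$x=y$ or a W-walk connects $x$ and $y$" is an equivalence relation with classes $W_1,\dots,W_q$; the weak nodal domains of $f$ are the induced subgraphs on $W_i^0=W_i\cup\{x\in V:\text{there is a W-walk from } x \text{ to some vertex of } W_i\}$. *)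

theory Defs
  imports Complex_Main
begin

definition signed_graph :: "'a set \<Rightarrow> 'a set set \<Rightarrow> ('a set \<Rightarrow> real) \<Rightarrow> bool" where
  "signed_graph V E \<sigma> \<longleftrightarrow> finite V \<and>
     (\<forall>e\<in>E. \<exists>u v. u \<in> V \<and> v \<in> V \<and> u \<noteq> v \<and> e = {u, v}) \<and>
     (\<forall>e\<in>E. \<sigma> e = 1 \<or> \<sigma> e = -1)"

definition is_walk :: "'a set set \<Rightarrow> 'a list \<Rightarrow> bool" where
  "is_walk E ys \<longleftrightarrow> length ys \<ge> 2 \<and>
     (\<forall>k. Suc k < length ys \<longrightarrow> {ys ! k, ys ! Suc k} \<in> E)"

definition is_W_walk :: "'a set set \<Rightarrow> ('a set \<Rightarrow> real) \<Rightarrow> ('a \<Rightarrow> real) \<Rightarrow> 'a list \<Rightarrow> bool" where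
  "is_W_walk E \<sigma> f ys \<longleftrightarrow> is_walk E ys \<and>
     (\<forall>i j. i < j \<and> j < length ys \<and> f (ys ! i) \<noteq> 0 \<and> f (ys ! j) \<noteq> 0 \<and>
        (\<forall>l. i < l \<and> l < j \<longrightarrow> f (ys ! l) = 0) \<longrightarrow>
        f (ys ! i) * (\<Prod>k\<in>{i..<j}. \<sigma> {ys ! k, ys ! Suc k}) * f (ys ! j) > 0)"

definition W_connected :: "'a set set \<Rightarrow> ('a set \<Rightarrow> real) \<Rightarrow> ('a \<Rightarrow> real) \<Rightarrow> 'a \<Rightarrow> 'a \<Rightarrow> bool" where
  "W_connected E \<sigma> f x y \<longleftrightarrow> (\<exists>ys. is_W_walk E \<sigma> f ys \<and> hd ys = x \<and> last ys = y)"

definition nonzero_set :: "'a set \<Rightarrow> ('a \<Rightarrow> real) \<Rightarrow> 'a set" where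
  "nonzero_set V f = {x \<in> V. f x \<noteq> 0}"

definition W_rel :: "'a set \<Rightarrow> 'a set set \<Rightarrow> ('a set \<Rightarrow> real) \<Rightarrow> ('a \<Rightarrow> real) \<Rightarrow> ('a \<times> 'a) set" where
  "W_rel V E \<sigma> f = {(x, y). x \<in> nonzero_set V f \<and> y \<in> nonzero_set V f \<and>
       (x = y \<or> W_connected E \<sigma> f x y)}"

definition W_classes :: "'a set \<Rightarrow> 'a set set \<Rightarrow> ('a set \<Rightarrow> real) \<Rightarrow> ('a \<Rightarrow> real) \<Rightarrow> 'a set set" where
  "W_classes V E \<sigma> f = nonzero_set V f // W_rel V E \<sigma> f"

definition W_closure :: "'a set \<Rightarrow> 'a set set \<Rightarrow> ('a set \<Rightarrow> real) \<Rightarrow> ('a \<Rightarrow> real) \<Rightarrow> 'a set \<Rightarrow> 'a set" where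
  "W_closure V E \<sigma> f W = W \<union> {x \<in> V. \<exists>y\<in>W. W_connected E \<sigma> f x y}"

definition weak_nodal_domains :: "'a set \<Rightarrow> 'a set set \<Rightarrow> ('a set \<Rightarrow> real) \<Rightarrow> ('a \<Rightarrow> real) \<Rightarrow> 'a set set" where
  "weak_nodal_domains V E \<sigma> f = W_closure V E \<sigma> f ` W_classes V E \<sigma> f"

end

theory Submission
  imports Defs
begin

text \<open>A vertex z with f z \<noteq> 0 lies in the weak nodal domain of its own class only, because a
  nonzero vertex W-connected to a class belongs to it. If f z = 0, every weak nodal domain through z
  is reached from z by a walk on which f vanishes until its last vertex w; call the product of the
  edge signs along the walk times f w its transport. Two such walks whose transports have the same
  sign form, after reversing one and concatenating, a W-walk between their endpoints, so they lead
  to the same domain. Among the transports of three walks, two have the same sign.\<close>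

lemma take_butlast_append:
  assumes "xs \<noteq> []" "ys \<noteq> []" "last xs = hd ys"
  shows "take (length xs) (butlast xs @ ys) = xs"
  using assms by (cases xs rule: rev_cases; cases ys) auto

lemma drop_butlast_append: "xs \<noteq> [] \<Longrightarrow> drop (length xs - 1) (butlast xs @ ys) = ys"
  by simp

definition walk_sign :: "('a set \<Rightarrow> real) \<Rightarrow> 'a list \<Rightarrow> nat \<Rightarrow> nat \<Rightarrow> real" where
  "walk_sign \<sigma> ys i j = (\<Prod>k\<in>{i..<j}. \<sigma> {ys ! k, ys ! Suc k})"

lemma walk_sign_take:
  assumes "j < n"
  shows "walk_sign \<sigma> (take n ys) i j = walk_sign \<sigma> ys i j"
  unfolding walk_sign_def using assms by (intro prod.cong) auto

lemma walk_sign_drop: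
  assumes "p \<le> length ys"
  shows "walk_sign \<sigma> (drop p ys) i j = walk_sign \<sigma> ys (p + i) (p + j)"
  unfolding walk_sign_def
  using assms prod.shift_bounds_nat_ivl[of "\<lambda>k. \<sigma> {ys ! k, ys ! Suc k}" i p j]
  by (simp add: add.commute)

lemma walk_sign_split:
  assumes "i \<le> k" "k \<le> j"
  shows "walk_sign \<sigma> ys i j = walk_sign \<sigma> ys i k * walk_sign \<sigma> ys k j"
  unfolding walk_sign_def using assms by (simp add: prod.atLeastLessThan_concat)

lemma walk_sign_rev:
  assumes "i \<le> j" "j < length ys"
  shows "walk_sign \<sigma> (rev ys) i j = walk_sign \<sigma> ys (length ys - 1 - j) (length ys - 1 - i)"
  unfolding walk_sign_def
proof (rule prod.reindex_bij_witness[of _ "\<lambda>k. length ys - 2 - k" "\<lambda>k. length ys - 2 - k"])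
  fix k assume k: "k \<in> {i..<j}"
  then show "length ys - 2 - (length ys - 2 - k) = k"
    and "length ys - 2 - k \<in> {length ys - 1 - j..<length ys - 1 - i}" using assms by auto
  have "rev ys ! k = ys ! Suc (length ys - 2 - k)" "rev ys ! Suc k = ys ! (length ys - 2 - k)"
    using k assms by (auto simp: rev_nth Suc_diff_Suc)
  then show "\<sigma> {ys ! (length ys - 2 - k), ys ! Suc (length ys - 2 - k)} = \<sigma> {rev ys ! k, rev ys ! Suc k}"
    by (simp add: insert_commute)
next
  fix k assume "k \<in> {length ys - 1 - j..<length ys - 1 - i}"
  then show "length ys - 2 - (length ys - 2 - k) = k" and "length ys - 2 - k \<in> {i..<j}"
    using assms by auto
qed

lemma walk_sign_nonzero:
  assumes "signed_graph V E \<sigma>" "is_walk E ys" "j < length ys"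
  shows "walk_sign \<sigma> ys i j \<noteq> 0"
proof -
  have "\<sigma> {ys ! k, ys ! Suc k} \<noteq> 0" if "k < j" for k
  proof -
    have "{ys ! k, ys ! Suc k} \<in> E" using assms(2,3) that unfolding is_walk_def by auto
    then show ?thesis using assms(1) unfolding signed_graph_def by fastforce
  qed
  then show ?thesis unfolding walk_sign_def by simp
qed

lemma walk_sign_append:
  assumes "xs \<noteq> []" "ys \<noteq> []" "last xs = hd ys"
  shows "walk_sign \<sigma> (butlast xs @ ys) 0 (length xs + length ys - 2) =
           walk_sign \<sigma> xs 0 (length xs - 1) * walk_sign \<sigma> ys 0 (length ys - 1)"
proof -
  let ?c = "length xs - 1" and ?zs = "butlast xs @ ys"
  have "length xs + length ys - 2 = ?c + (length ys - 1)"
    using assms(1,2) by (cases xs; cases ys) auto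
  then have "walk_sign \<sigma> ?zs 0 (length xs + length ys - 2) =
               walk_sign \<sigma> ?zs 0 ?c * walk_sign \<sigma> ?zs ?c (?c + (length ys - 1))"
    by (metis le0 le_add1 walk_sign_split)
  also have "walk_sign \<sigma> ?zs 0 ?c = walk_sign \<sigma> (take (length xs) ?zs) 0 ?c"
    by (rule walk_sign_take[symmetric]) (use assms(1) in simp)
  also have "walk_sign \<sigma> ?zs ?c (?c + (length ys - 1)) = walk_sign \<sigma> (drop ?c ?zs) 0 (length ys - 1)"
    by (subst walk_sign_drop) auto
  finally show ?thesis
    using take_butlast_append[OF assms] drop_butlast_append[OF assms(1)] by simp
qed

lemma is_walk_length: "is_walk E ys \<Longrightarrow> 2 \<le> length ys"
  unfolding is_walk_def by simp

lemma is_walk_take: "is_walk E ys \<Longrightarrow> 2 \<le> n \<Longrightarrow> is_walk E (take n ys)"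
  unfolding is_walk_def by auto

lemma is_walk_drop: "is_walk E ys \<Longrightarrow> p + 2 \<le> length ys \<Longrightarrow> is_walk E (drop p ys)"
  unfolding is_walk_def by (auto simp: algebra_simps)

lemma is_walk_split:
  assumes "is_walk E (take (Suc c) zs)" "is_walk E (drop c zs)"
  shows "is_walk E zs"
  unfolding is_walk_def
proof (intro conjI allI impI)
  have c: "c + 2 \<le> length zs" using is_walk_length[OF assms(2)] by simp
  then show "2 \<le> length zs" by simp
  fix k assume k: "Suc k < length zs"
  show "{zs ! k, zs ! Suc k} \<in> E"
  proof (cases "k < c")
    case True
    then show ?thesis using assms(1) k unfolding is_walk_def by auto
  next
    case False
    then have "Suc (k - c) < length (drop c zs)" using k by auto
    then have "{drop c zs ! (k - c), drop c zs ! Suc (k - c)} \<in> E"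
      using assms(2) unfolding is_walk_def by blast
    moreover have "c + (k - c) = k" "c + Suc (k - c) = Suc k" using False by auto
    ultimately show ?thesis using c by simp
  qed
qed

lemma is_walk_append:
  assumes "is_walk E xs" "is_walk E ys" "last xs = hd ys"
  shows "is_walk E (butlast xs @ ys)"
proof (rule is_walk_split[where c = "length xs - 1"])
  have ne: "xs \<noteq> []" "ys \<noteq> []" using is_walk_length assms(1,2) by fastforce+
  then have "Suc (length xs - 1) = length xs" by simp
  then show "is_walk E (take (Suc (length xs - 1)) (butlast xs @ ys))"
    using take_butlast_append[OF ne assms(3)] assms(1) by simp
  show "is_walk E (drop (length xs - 1) (butlast xs @ ys))"
    using drop_butlast_append[OF ne(1)] assms(2) by simp
qed

lemma is_walk_rev: "is_walk E ys \<Longrightarrow> is_walk E (rev ys)"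
  unfolding is_walk_def
proof (intro conjI allI impI)
  fix k assume ys: "2 \<le> length ys \<and> (\<forall>k. Suc k < length ys \<longrightarrow> {ys ! k, ys ! Suc k} \<in> E)"
    and k: "Suc k < length (rev ys)"
  then have "{ys ! (length ys - 2 - k), ys ! Suc (length ys - 2 - k)} \<in> E" by auto
  moreover have "rev ys ! k = ys ! Suc (length ys - 2 - k)" "rev ys ! Suc k = ys ! (length ys - 2 - k)"
    using k by (auto simp: rev_nth Suc_diff_Suc)
  ultimately show "{rev ys ! k, rev ys ! Suc k} \<in> E" by (simp add: insert_commute)
qed auto

lemma set_walk_subset:
  assumes "signed_graph V E \<sigma>" "is_walk E ys"
  shows "set ys \<subseteq> V"
proof
  have edge: "a \<in> V" if "{a, b} \<in> E" for a b
    using assms(1) that unfolding signed_graph_def by (metis doubleton_eq_iff)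
  fix x assume "x \<in> set ys"
  then obtain k where k: "k < length ys" "ys ! k = x" by (auto simp: in_set_conv_nth)
  show "x \<in> V"
  proof (cases "Suc k < length ys")
    case True
    then show ?thesis using assms(2) edge k unfolding is_walk_def by blast
  next
    case False
    then have "Suc (k - 1) < length ys" "Suc (k - 1) = k"
      using is_walk_length[OF assms(2)] k by auto
    then show ?thesis using assms(2) edge k unfolding is_walk_def by (metis insert_commute)
  qed
qed

lemma is_W_walkI:
  assumes "is_walk E ys"
    and "\<And>i j. i < j \<Longrightarrow> j < length ys \<Longrightarrow> f (ys ! i) \<noteq> 0 \<Longrightarrow> f (ys ! j) \<noteq> 0 \<Longrightarrow>
           (\<And>l. i < l \<Longrightarrow> l < j \<Longrightarrow> f (ys ! l) = 0) \<Longrightarrow>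
           0 < f (ys ! i) * walk_sign \<sigma> ys i j * f (ys ! j)"
  shows "is_W_walk E \<sigma> f ys"
  using assms unfolding is_W_walk_def walk_sign_def by blast

lemma is_W_walkD:
  assumes "is_W_walk E \<sigma> f ys" "i < j" "j < length ys" "f (ys ! i) \<noteq> 0" "f (ys ! j) \<noteq> 0"
    and "\<And>l. i < l \<Longrightarrow> l < j \<Longrightarrow> f (ys ! l) = 0"
  shows "0 < f (ys ! i) * walk_sign \<sigma> ys i j * f (ys ! j)"
  using assms unfolding is_W_walk_def walk_sign_def by blast

lemma is_W_walk_is_walk: "is_W_walk E \<sigma> f ys \<Longrightarrow> is_walk E ys"
  unfolding is_W_walk_def by simp

lemma is_W_walk_drop:
  assumes "is_W_walk E \<sigma> f ys" "p + 2 \<le> length ys"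
  shows "is_W_walk E \<sigma> f (drop p ys)"
proof (rule is_W_walkI)
  show "is_walk E (drop p ys)" using assms is_walk_drop is_W_walk_is_walk by blast
  fix i j
  assume "i < j" "j < length (drop p ys)" "f (drop p ys ! i) \<noteq> 0" "f (drop p ys ! j) \<noteq> 0"
    and "\<And>l. i < l \<Longrightarrow> l < j \<Longrightarrow> f (drop p ys ! l) = 0"
  moreover have "f (ys ! l) = 0" if "p + i < l" "l < p + j" for l
    using calculation(5)[of "l - p"] that assms(2) by simp
  ultimately show "0 < f (drop p ys ! i) * walk_sign \<sigma> (drop p ys) i j * f (drop p ys ! j)"
    using is_W_walkD[OF assms(1), of "p + i" "p + j"] assms(2) by (simp add: walk_sign_drop)
qed

lemma is_W_walk_split:
  assumes "is_W_walk E \<sigma> f (take (Suc c) zs)" "is_W_walk E \<sigma> f (drop c zs)" "f (zs ! c) \<noteq> 0"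
  shows "is_W_walk E \<sigma> f zs"
proof (rule is_W_walkI)
  show "is_walk E zs" using assms(1,2) is_walk_split is_W_walk_is_walk by blast
  then have c: "c + 2 \<le> length zs"
    using is_walk_length[OF is_W_walk_is_walk[OF assms(2)]] by simp
  fix i j
  assume ij: "i < j" "j < length zs" "f (zs ! i) \<noteq> 0" "f (zs ! j) \<noteq> 0"
    and between: "\<And>l. i < l \<Longrightarrow> l < j \<Longrightarrow> f (zs ! l) = 0"
  consider "j \<le> c" | "c \<le> i" | "i < c" "c < j" by linarith
  then show "0 < f (zs ! i) * walk_sign \<sigma> zs i j * f (zs ! j)"
  proof cases
    case 1
    then show ?thesis
      using is_W_walkD[OF assms(1), of i j] ij between by (simp add: walk_sign_take)
  next
    case 2
    have "f (drop c zs ! l) = 0" if "i - c < l" "l < j - c" for l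
      using between[of "c + l"] that 2 c by simp
    then show ?thesis
      using is_W_walkD[OF assms(2), of "i - c" "j - c"] ij 2 c by (simp add: walk_sign_drop)
  next
    case 3
    then show ?thesis using between assms(3) by blast
  qed
qed

lemma is_W_walk_append:
  assumes "is_W_walk E \<sigma> f xs" "is_W_walk E \<sigma> f ys" "last xs = hd ys" "f (hd ys) \<noteq> 0"
  shows "is_W_walk E \<sigma> f (butlast xs @ ys)"
proof (rule is_W_walk_split[where c = "length xs - 1"])
  have ne: "xs \<noteq> []" "ys \<noteq> []" using is_walk_length is_W_walk_is_walk assms(1,2) by fastforce+
  then have "Suc (length xs - 1) = length xs" by simp
  then show "is_W_walk E \<sigma> f (take (Suc (length xs - 1)) (butlast xs @ ys))"
    using take_butlast_append[OF ne assms(3)] assms(1) by simp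
  show "is_W_walk E \<sigma> f (drop (length xs - 1) (butlast xs @ ys))"
    using drop_butlast_append[OF ne(1)] assms(2) by simp
  show "f ((butlast xs @ ys) ! (length xs - 1)) \<noteq> 0"
    using ne assms(4) by (simp add: nth_append hd_conv_nth)
qed

lemma is_W_walk_rev:
  assumes "is_W_walk E \<sigma> f ys"
  shows "is_W_walk E \<sigma> f (rev ys)"
proof (rule is_W_walkI)
  show "is_walk E (rev ys)" using assms is_walk_rev is_W_walk_is_walk by blast
  define m where "m = length ys - 1"
  fix i j
  assume ij: "i < j" "j < length (rev ys)" "f (rev ys ! i) \<noteq> 0" "f (rev ys ! j) \<noteq> 0"
    and between: "\<And>l. i < l \<Longrightarrow> l < j \<Longrightarrow> f (rev ys ! l) = 0"
  have rev_ys_nth: "rev ys ! k = ys ! (m - k)" if "k \<le> j" for k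
    using that ij(2) by (simp add: rev_nth m_def)
  have "f (ys ! l) = 0" if "m - j < l" "l < m - i" for l
    using between[of "m - l"] rev_ys_nth[of "m - l"] that ij(2) m_def by auto
  then have "0 < f (ys ! (m - j)) * walk_sign \<sigma> ys (m - j) (m - i) * f (ys ! (m - i))"
    using is_W_walkD[OF assms, of "m - j" "m - i"] ij rev_ys_nth m_def by auto
  then show "0 < f (rev ys ! i) * walk_sign \<sigma> (rev ys) i j * f (rev ys ! j)"
    using walk_sign_rev[of i j ys \<sigma>] ij rev_ys_nth m_def by (simp add: mult_ac)
qed

lemma is_W_walk_if_interior_vanishes:
  assumes "is_walk E ys"
    and "\<And>k. 0 < k \<Longrightarrow> k < length ys - 1 \<Longrightarrow> f (ys ! k) = 0"
    and "0 < f (hd ys) * walk_sign \<sigma> ys 0 (length ys - 1) * f (last ys)"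
  shows "is_W_walk E \<sigma> f ys"
proof (rule is_W_walkI[OF assms(1)])
  have ne: "ys \<noteq> []" using is_walk_length[OF assms(1)] by auto
  fix i j
  assume ij: "i < j" "j < length ys" "f (ys ! i) \<noteq> 0" "f (ys ! j) \<noteq> 0"
  have "i = 0"
  proof (rule ccontr)
    assume "i \<noteq> 0"
    moreover have "i < length ys - 1" using ij by linarith
    ultimately show False using assms(2)[of i] ij by simp
  qed
  moreover have "j = length ys - 1"
  proof (rule ccontr)
    assume "j \<noteq> length ys - 1"
    then have "j < length ys - 1" using ij by linarith
    then show False using assms(2)[of j] ij by simp
  qed
  ultimately show "0 < f (ys ! i) * walk_sign \<sigma> ys i j * f (ys ! j)"
    using assms(3) ne by (simp add: hd_conv_nth last_conv_nth)
qed

lemma W_connected_sym: "W_connected E \<sigma> f x y \<Longrightarrow> W_connected E \<sigma> f y x"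
  unfolding W_connected_def using is_W_walk_rev by (fastforce simp: hd_rev last_rev)

lemma W_connected_trans:
  assumes "W_connected E \<sigma> f x y" "W_connected E \<sigma> f y z" "f y \<noteq> 0"
  shows "W_connected E \<sigma> f x z"
proof -
  obtain xs ys where xs: "is_W_walk E \<sigma> f xs" "hd xs = x" "last xs = y"
    and ys: "is_W_walk E \<sigma> f ys" "hd ys = y" "last ys = z"
    using assms(1,2) unfolding W_connected_def by blast
  have "2 \<le> length xs" "2 \<le> length ys"
    using is_walk_length is_W_walk_is_walk xs(1) ys(1) by blast+
  then have "hd (butlast xs @ ys) = x" "last (butlast xs @ ys) = z"
    using xs(2) ys(3) by (cases xs, auto, cases ys, auto)
  then show ?thesis
    using is_W_walk_append[OF xs(1) ys(1)] xs(3) ys(2) assms(3) unfolding W_connected_def by auto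
qed

lemma W_rel_equiv:
  "equiv (nonzero_set V f) (W_rel V E \<sigma> f)"
proof (rule equivI)
  show "W_rel V E \<sigma> f \<subseteq> nonzero_set V f \<times> nonzero_set V f"
    unfolding W_rel_def by blast
  show "refl_on (nonzero_set V f) (W_rel V E \<sigma> f)"
    unfolding refl_on_def W_rel_def by blast
  show "sym (W_rel V E \<sigma> f)"
    unfolding sym_def W_rel_def by (auto dest: W_connected_sym)
  show "trans (W_rel V E \<sigma> f)"
    unfolding trans_def W_rel_def nonzero_set_def by (auto intro: W_connected_trans)
qed

definition vanishing_walk :: "'a set set \<Rightarrow> ('a \<Rightarrow> real) \<Rightarrow> 'a list \<Rightarrow> bool" where
  "vanishing_walk E f A \<longleftrightarrow>
     is_walk E A \<and> (\<forall>k < length A - 1. f (A ! k) = 0) \<and> f (last A) \<noteq> 0"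

definition transport :: "('a set \<Rightarrow> real) \<Rightarrow> ('a \<Rightarrow> real) \<Rightarrow> 'a list \<Rightarrow> real" where
  "transport \<sigma> f A = walk_sign \<sigma> A 0 (length A - 1) * f (last A)"

lemma transport_nonzero:
  assumes "signed_graph V E \<sigma>" "vanishing_walk E f A"
  shows "transport \<sigma> f A \<noteq> 0"
proof -
  have "length A - 1 < length A" using assms(2) is_walk_length unfolding vanishing_walk_def by fastforce
  then show ?thesis
    using walk_sign_nonzero[OF assms(1)] assms(2) unfolding vanishing_walk_def transport_def by simp
qed

lemma vanishing_walk_prefix:
  assumes ys: "is_W_walk E \<sigma> f ys" "f (hd ys) = 0" "f (last ys) \<noteq> 0"
  obtains A where "vanishing_walk E f A" "hd A = hd ys"
    "last A = last ys \<or> W_connected E \<sigma> f (last A) (last ys)"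
proof -
  define n where "n = length ys"
  have n: "2 \<le> n" using is_walk_length[OF is_W_walk_is_walk[OF ys(1)]] n_def by simp
  then have "ys \<noteq> []" using n_def by auto
  then have ends: "hd ys = ys ! 0" "last ys = ys ! (n - 1)"
    using n_def by (simp_all add: hd_conv_nth last_conv_nth)
  define p where "p = (LEAST k. f (ys ! k) \<noteq> 0)"
  have fp: "f (ys ! p) \<noteq> 0" and p_le: "p \<le> n - 1"
    using LeastI[of "\<lambda>k. f (ys ! k) \<noteq> 0"] Least_le[of "\<lambda>k. f (ys ! k) \<noteq> 0"] ys(3) ends
    unfolding p_def by auto
  have "p \<noteq> 0" using fp ys(2) ends by (intro notI) simp
  have before_p: "f (ys ! k) = 0" if "k < p" for k
    using not_less_Least[of k "\<lambda>k. f (ys ! k) \<noteq> 0"] that unfolding p_def by simp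
  define A where "A = take (Suc p) ys"
  have "length A = Suc p" using p_le n unfolding A_def n_def by auto
  then have "last A = ys ! p" unfolding A_def by (subst last_conv_nth) auto
  with \<open>length A = Suc p\<close> have "vanishing_walk E f A" "hd A = hd ys"
    using is_walk_take[OF is_W_walk_is_walk[OF ys(1)]] \<open>p \<noteq> 0\<close> before_p fp ends
    unfolding vanishing_walk_def A_def by (auto simp: hd_conv_nth last_conv_nth)
  moreover have "last A = last ys \<or> W_connected E \<sigma> f (last A) (last ys)"
  proof (cases "p = n - 1")
    case True
    then show ?thesis using \<open>last A = ys ! p\<close> ends by simp
  next
    case False
    then have "p + 2 \<le> length ys" using p_le n_def by auto
    then have "is_W_walk E \<sigma> f (drop p ys)" "hd (drop p ys) = ys ! p" "last (drop p ys) = last ys"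
      using is_W_walk_drop[OF ys(1)] by (simp_all add: hd_drop_conv_nth)
    then show ?thesis using \<open>last A = ys ! p\<close> unfolding W_connected_def by auto
  qed
  ultimately show ?thesis using that by blast
qed

lemma W_connected_if_transports_agree:
  assumes A1: "vanishing_walk E f A1" and A2: "vanishing_walk E f A2" and "hd A1 = hd A2"
    and pos: "0 < transport \<sigma> f A1 * transport \<sigma> f A2"
  shows "W_connected E \<sigma> f (last A1) (last A2)"
proof -
  define c where "c = length A1 - 1"
  define B where "B = butlast (rev A1) @ A2"
  have walks: "is_walk E A1" "is_walk E A2" using A1 A2 unfolding vanishing_walk_def by auto
  then have ne: "rev A1 \<noteq> []" "A2 \<noteq> []" and "2 \<le> length A1"
    using is_walk_length by fastforce+
  have junction: "last (rev A1) = hd A2" using ne \<open>hd A1 = hd A2\<close> by (simp add: last_rev)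
  have take_B: "take (Suc c) B = rev A1" and drop_B: "drop c B = A2"
    using take_butlast_append[OF ne junction] drop_butlast_append[OF ne(1)] ne
    unfolding B_def c_def by auto
  have lB: "length B = c + length A2" using ne unfolding B_def c_def by auto
  have B_left: "B ! k = A1 ! (c - k)" if "k \<le> c" for k
  proof -
    have "B ! k = take (Suc c) B ! k" using that by simp
    then show ?thesis
      unfolding take_B using that c_def \<open>2 \<le> length A1\<close> by (simp add: rev_nth)
  qed
  have B_right: "B ! (c + k) = A2 ! k" for k
    using nth_drop[of c B k] drop_B lB by simp
  have "is_walk E B" unfolding B_def using is_walk_append[OF is_walk_rev[OF walks(1)] walks(2) junction] .
  moreover have "f (B ! k) = 0" if "0 < k" "k < length B - 1" for k
  proof (cases "k \<le> c")
    case True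
    then show ?thesis using A1 that B_left unfolding vanishing_walk_def c_def by simp
  next
    case False
    then show ?thesis using A2 that B_right[of "k - c"] lB unfolding vanishing_walk_def by simp
  qed
  moreover have "B \<noteq> []" using lB ne by auto
  then have "hd B = last A1" using B_left[of 0] ne c_def by (simp add: hd_conv_nth last_conv_nth)
  moreover have "last B = last A2" unfolding B_def using ne by simp
  moreover have "walk_sign \<sigma> B 0 (length B - 1) =
                   walk_sign \<sigma> A1 0 (length A1 - 1) * walk_sign \<sigma> A2 0 (length A2 - 1)"
  proof -
    have "length B - 1 = length (rev A1) + length A2 - 2"
      using lB c_def \<open>2 \<le> length A1\<close> by simp
    then show ?thesis
      using walk_sign_append[OF ne junction] walk_sign_rev[of 0 "length A1 - 1" A1 \<sigma>] ne
      unfolding B_def by simp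
  qed
  ultimately have "is_W_walk E \<sigma> f B"
    using pos by (intro is_W_walk_if_interior_vanishes) (auto simp: transport_def mult_ac)
  then show ?thesis using \<open>hd B = last A1\<close> \<open>last B = last A2\<close> unfolding W_connected_def by blast
qed

lemma last_vanishing_walk_nonzero:
  assumes "signed_graph V E \<sigma>" "vanishing_walk E f A"
  shows "last A \<in> nonzero_set V f"
proof -
  have "A \<noteq> []" "set A \<subseteq> V"
    using assms is_walk_length set_walk_subset unfolding vanishing_walk_def by fastforce+
  then show ?thesis using assms(2) unfolding vanishing_walk_def nonzero_set_def by auto
qed

lemma weak_nodal_domainE:
  assumes "D \<in> weak_nodal_domains V E \<sigma> f"
  obtains a where "a \<in> nonzero_set V f" "D = W_closure V E \<sigma> f (W_rel V E \<sigma> f `` {a})"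
  using assms unfolding weak_nodal_domains_def W_classes_def by (auto elim!: quotientE)

lemma weak_nodal_domain_at_nonzero:
  assumes "D \<in> weak_nodal_domains V E \<sigma> f" "z \<in> D" "f z \<noteq> 0"
  shows "D = W_closure V E \<sigma> f (W_rel V E \<sigma> f `` {z})"
proof -
  let ?R = "W_rel V E \<sigma> f"
  obtain a where a: "a \<in> nonzero_set V f" "D = W_closure V E \<sigma> f (?R `` {a})"
    using assms(1) by (rule weak_nodal_domainE)
  have "(a, z) \<in> ?R"
  proof (cases "z \<in> ?R `` {a}")
    case False
    then obtain y where "(a, y) \<in> ?R" "z \<in> V" "W_connected E \<sigma> f z y"
      using assms(2) a(2) unfolding W_closure_def by blast
    then show ?thesis
      using assms(3) W_connected_sym W_connected_trans
      unfolding W_rel_def nonzero_set_def by fastforce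
  qed simp
  then show ?thesis using a(2) equiv_class_eq[OF W_rel_equiv] by metis
qed

lemma weak_nodal_domain_at_zero:
  assumes "signed_graph V E \<sigma>" "D \<in> weak_nodal_domains V E \<sigma> f" "z \<in> D" "f z = 0"
  obtains A where "vanishing_walk E f A" "hd A = z"
    "D = W_closure V E \<sigma> f (W_rel V E \<sigma> f `` {last A})"
proof -
  let ?R = "W_rel V E \<sigma> f"
  obtain a where a: "a \<in> nonzero_set V f" "D = W_closure V E \<sigma> f (?R `` {a})"
    using assms(2) by (rule weak_nodal_domainE)
  have "z \<notin> ?R `` {a}" using assms(4) unfolding W_rel_def nonzero_set_def by blast
  then obtain y where y: "(a, y) \<in> ?R" "W_connected E \<sigma> f z y"
    using assms(3) a(2) unfolding W_closure_def by blast
  then obtain ys where ys: "is_W_walk E \<sigma> f ys" "hd ys = z" "last ys = y"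
    unfolding W_connected_def by blast
  have "f y \<noteq> 0" using y(1) unfolding W_rel_def nonzero_set_def by blast
  then obtain A where A: "vanishing_walk E f A" "hd A = z"
    "last A = y \<or> W_connected E \<sigma> f (last A) y"
    using vanishing_walk_prefix[OF ys(1)] ys assms(4) by metis
  have "(a, last A) \<in> ?R"
    using A(3) y(1) last_vanishing_walk_nonzero[OF assms(1) A(1)] W_connected_sym W_connected_trans
    unfolding W_rel_def nonzero_set_def by fastforce
  then show ?thesis using that A a(2) equiv_class_eq[OF W_rel_equiv] by metis
qed

lemma W_closure_eq_if_transports_agree:
  assumes "signed_graph V E \<sigma>" "vanishing_walk E f A1" "vanishing_walk E f A2" "hd A1 = hd A2"
    and "0 < transport \<sigma> f A1 * transport \<sigma> f A2"
  shows "W_closure V E \<sigma> f (W_rel V E \<sigma> f `` {last A1}) =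
           W_closure V E \<sigma> f (W_rel V E \<sigma> f `` {last A2})"
proof -
  have "(last A1, last A2) \<in> W_rel V E \<sigma> f"
    using W_connected_if_transports_agree[OF assms(2-5)]
      last_vanishing_walk_nonzero[OF assms(1)] assms(2,3)
    unfolding W_rel_def by blast
  then show ?thesis using equiv_class_eq[OF W_rel_equiv] by metis
qed

lemma two_of_three_same_sign:
  fixes a b c :: real
  assumes "a \<noteq> 0" "b \<noteq> 0" "c \<noteq> 0"
  shows "0 < a * b \<or> 0 < a * c \<or> 0 < b * c"
  using assms by (auto simp: zero_less_mult_iff linorder_neq_iff)

theorem proposition3p8:
  fixes V :: "'a set" and E :: "'a set set" and \<sigma> :: "'a set \<Rightarrow> real" and f :: "'a \<Rightarrow> real"
  assumes "signed_graph V E \<sigma>"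
    and "\<exists>x\<in>V. f x \<noteq> 0"
    and "D1 \<in> weak_nodal_domains V E \<sigma> f"
    and "D2 \<in> weak_nodal_domains V E \<sigma> f"
    and "D3 \<in> weak_nodal_domains V E \<sigma> f"
    and "D1 \<noteq> D2" and "D1 \<noteq> D3" and "D2 \<noteq> D3"
  shows "D1 \<inter> D2 \<inter> D3 = {}"
proof (rule ccontr)
  assume "D1 \<inter> D2 \<inter> D3 \<noteq> {}"
  then obtain z where z: "z \<in> D1" "z \<in> D2" "z \<in> D3" by blast
  show False
  proof (cases "f z = 0")
    case False
    then show False
      using weak_nodal_domain_at_nonzero assms(3,4,6) z(1,2) by metis
  next
    case True
    obtain A1 where A1: "vanishing_walk E f A1" "hd A1 = z"
        "D1 = W_closure V E \<sigma> f (W_rel V E \<sigma> f `` {last A1})"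
      using weak_nodal_domain_at_zero[OF assms(1,3) z(1) True] .
    obtain A2 where A2: "vanishing_walk E f A2" "hd A2 = z"
        "D2 = W_closure V E \<sigma> f (W_rel V E \<sigma> f `` {last A2})"
      using weak_nodal_domain_at_zero[OF assms(1,4) z(2) True] .
    obtain A3 where A3: "vanishing_walk E f A3" "hd A3 = z"
        "D3 = W_closure V E \<sigma> f (W_rel V E \<sigma> f `` {last A3})"
      using weak_nodal_domain_at_zero[OF assms(1,5) z(3) True] .
    have "0 < transport \<sigma> f A1 * transport \<sigma> f A2 \<or> 0 < transport \<sigma> f A1 * transport \<sigma> f A3 \<or>
          0 < transport \<sigma> f A2 * transport \<sigma> f A3"
      using A1 A2 A3 by (intro two_of_three_same_sign transport_nonzero[OF assms(1)])
    then show False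
      using W_closure_eq_if_transports_agree[OF assms(1)] A1 A2 A3 assms(6-8) by metis
  qed
qed

end
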